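(* Let $(\mathcal{R},\mu)$ be resonant, let $\|\cdot\|_X$ be an r.i. quasi-Banach function norm on $\mathcal{M}(\mathcal{R},\mu)$ with corresponding space $X$, and let $\|\cdot\|_{\overline{X}}$ be the r.i. quasi-Banach function norm on $\mathcal{M}([0,\infty),\lambda)$ constructed as in the context, with corresponding space $\overline{X}$. Assume that $L^1\cap L^\infty\hookrightarrow X$ (over $(\mathcal{R},\mu)$) and that there exists $f_0\in\overline{X}$ with $f_0^*(0)=\infty$. Then $L^1\cap L^\infty\subseteq X_a$.
   Context: Let $(\mathcal{R},\mu)$ be a $\sigma$-finite measure space; $\mathcal{M}$ denotes the $\mu$-measurable extended complex-valued functions (identified a.e.), $\mathcal{M}_+$ the non-negative ones. $f_*(s)=\mu(\{|f|>s\})$, $f^*(t)=\inf\{s\ge0;\,f_*(s)\le t\}$ (non-increasing rearrangement). $(\mathcal{R},\mu)$ is called resonant if it is either non-atomic or completely atomic with all atoms of equal measure. A quasi-Banach function norm is a map $\|\cdot\|:\mathcal{M}\to[0,\infty]$ with $\|f\|=\||f|\|$ such that on $\mathcal{M}_+$: (Q1) $\|af\|=|a|\|f\|$, $\|f\|=0\iff f=0$ a.e., and there is $C\ge1$ (modulus of concavity) with $\|f+g\|\le C(\|f\|+\|g\|)$; (P2) $f\le g$ a.e. implies $\|f\|\le\|g\|$; (P3) $f_n\uparrow f$ a.e. implies $\|f_n\|\uparrow\|f\|$; (P4) $\|\chi_E\|<\infty$ whenever $\mu(E)<\infty$. The norm is rearrangement-invariant (r.i.) if $\|f\|=\|g\|$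 whenever $f^*=g^*$. The corresponding space is $X=\{f\in\mathcal{M};\,\|f\|_X<\infty\}$. A function $f\in X$ has absolutely continuous quasinorm if $\|f\chi_{E_k}\|_X\to0$ for every sequence of measurable sets $E_k$ with $\chi_{E_k}\to0$ a.e.; $X_a$ denotes the set of such functions. $L^1\cap L^\infty$ is the space with norm $\|f\|_{L^1\cap L^\infty}=f^*(0)+\int_0^\infty f^*\,d\lambda$; $Y\hookrightarrow X$ means $Y\subseteq X$ with continuous inclusion. Construction of $\|\cdot\|_{\overline{X}}$: (i) If $(\mathcal{R},\mu)$ is non-atomic, fix a measure-preserving map $\sigma$ from $(\mathcal{R},\mu)$ onto $[0,\mu(\mathcal{R}))$ (with Lebesgue measure $\lambda$), and for $h\in\mathcal{M}([0,\mu(\mathcal{R})),\lambda)$ put $\|h\|_{\overline{X_0}}=\|h\circ\sigma\|_X$. (ii) If $(\mathcal{R},\mu)$ is completely atomic with all atoms of measure $\beta\in(0,\infty)$, fix an enumeration $(e_n)_{n\in\mathcal{N}}$ of the atoms, $\mathcal{N}=\{n\in\mathbb{N};\,\beta n<\mu(\mathcal{R})\}$ ($0\in\mathbb{N}$), define $T(h)(e_n)=\beta^{-1}\int_{\beta n}^{\beta(n+1)}h^*\,d\lambda$ for $n\in\mathcal{N}$, and put $\|h\|_{\overline{X_0}}=\|T(h)\|_X$. In both cases define, for $f\in\mathcal{M}([0,\infty),\lambda)$, $\|f\|_{\overline{X}}=\|f^*\chi_{[0,\mu(\mathcal{R}))}\|_{\overline{X_0}}$. (This is an r.i. quasi-Banach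 function norm with $\|f\|_X=\|f^*\|_{\overline{X}}$ for $f\in\mathcal{M}(\mathcal{R},\mu)$.) *)

theory Defs
  imports "HOL-Analysis.Analysis"
begin

text \<open>Functions are represented by their absolute values, i.e. as elements of
  M_+ with values in ennreal (the quasinorm satisfies ||f|| = || |f| ||, so it is
  determined by its restriction to non-negative functions).\<close>

definition rearr :: "'a measure \<Rightarrow> ('a \<Rightarrow> ennreal) \<Rightarrow> real \<Rightarrow> ennreal" where
  "rearr M f t = Inf {s::ennreal. emeasure M {x \<in> space M. s < f x} \<le> ennreal t}"

abbreviation halfline :: "real measure" where
  "halfline \<equiv> lebesgue_on {0..}"

definition atom :: "'a measure \<Rightarrow> 'a set \<Rightarrow> bool" where
  "atom M A \<longleftrightarrow> A \<in> sets M \<and> emeasure M A > 0 \<and>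
     (\<forall>B \<in> sets M. B \<subseteq> A \<longrightarrow> emeasure M B = 0 \<or> emeasure M (A - B) = 0)"

definition non_atomic :: "'a measure \<Rightarrow> bool" where
  "non_atomic M \<longleftrightarrow> \<not> (\<exists>A. atom M A)"

definition atom_index :: "'a measure \<Rightarrow> real \<Rightarrow> nat set" where
  "atom_index M \<beta> = {n. ennreal (\<beta> * real n) < emeasure M (space M)}"

definition atom_enum :: "'a measure \<Rightarrow> real \<Rightarrow> (nat \<Rightarrow> 'a set) \<Rightarrow> bool" where
  "atom_enum M \<beta> e \<longleftrightarrow> 0 < \<beta> \<and>
     (\<forall>n \<in> atom_index M \<beta>. atom M (e n) \<and> emeasure M (e n) = ennreal \<beta>) \<and>
     disjoint_family_on e (atom_index M \<beta>) \<and>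
     space M - (\<Union>n \<in> atom_index M \<beta>. e n) \<in> null_sets M"

definition completely_atomic_equal :: "'a measure \<Rightarrow> bool" where
  "completely_atomic_equal M \<longleftrightarrow> (\<exists>\<beta> e. atom_enum M \<beta> e)"

definition resonant :: "'a measure \<Rightarrow> bool" where
  "resonant M \<longleftrightarrow> non_atomic M \<or> completely_atomic_equal M"

definition qBFN :: "'a measure \<Rightarrow> (('a \<Rightarrow> ennreal) \<Rightarrow> ennreal) \<Rightarrow> bool" where
  "qBFN M N \<longleftrightarrow>
     (\<forall>f \<in> borel_measurable M. \<forall>a::real. a \<ge> 0 \<longrightarrow> N (\<lambda>x. ennreal a * f x) = ennreal a * N f) \<and>
     (\<forall>f \<in> borel_measurable M. N f = 0 \<longleftrightarrow> (AE x in M. f x = 0)) \<and>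
     (\<exists>C::real. C \<ge> 1 \<and> (\<forall>f \<in> borel_measurable M. \<forall>g \<in> borel_measurable M.
         N (\<lambda>x. f x + g x) \<le> ennreal C * (N f + N g))) \<and>
     (\<forall>f \<in> borel_measurable M. \<forall>g \<in> borel_measurable M.
         (AE x in M. f x \<le> g x) \<longrightarrow> N f \<le> N g) \<and>
     (\<forall>F f. (\<forall>n. F n \<in> borel_measurable M) \<longrightarrow> f \<in> borel_measurable M \<longrightarrow>
         (AE x in M. incseq (\<lambda>n. F n x) \<and> (\<lambda>n. F n x) \<longlonglongrightarrow> f x) \<longrightarrow>
         (\<lambda>n. N (F n)) \<longlonglongrightarrow> N f) \<and>
     (\<forall>A \<in> sets M. emeasure M A < \<infinity> \<longrightarrow> N (indicator A) < \<infinity>)"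

definition rearrangement_invariant :: "'a measure \<Rightarrow> (('a \<Rightarrow> ennreal) \<Rightarrow> ennreal) \<Rightarrow> bool" where
  "rearrangement_invariant M N \<longleftrightarrow>
     (\<forall>f \<in> borel_measurable M. \<forall>g \<in> borel_measurable M.
        (\<forall>t\<ge>0. rearr M f t = rearr M g t) \<longrightarrow> N f = N g)"

definition ri_qBFN :: "'a measure \<Rightarrow> (('a \<Rightarrow> ennreal) \<Rightarrow> ennreal) \<Rightarrow> bool" where
  "ri_qBFN M N \<longleftrightarrow> qBFN M N \<and> rearrangement_invariant M N"

definition in_space :: "'a measure \<Rightarrow> (('a \<Rightarrow> ennreal) \<Rightarrow> ennreal) \<Rightarrow> ('a \<Rightarrow> ennreal) \<Rightarrow> bool" where
  "in_space M N f \<longleftrightarrow> f \<in> borel_measurable M \<and> N f < \<infinity>"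

definition abs_cont :: "'a measure \<Rightarrow> (('a \<Rightarrow> ennreal) \<Rightarrow> ennreal) \<Rightarrow> ('a \<Rightarrow> ennreal) \<Rightarrow> bool" where
  "abs_cont M N f \<longleftrightarrow> in_space M N f \<and>
     (\<forall>E::nat \<Rightarrow> 'a set. (\<forall>k. E k \<in> sets M) \<longrightarrow>
        (AE x in M. (\<lambda>k. indicator (E k) x :: real) \<longlonglongrightarrow> 0) \<longrightarrow>
        (\<lambda>k. N (\<lambda>x. f x * indicator (E k) x)) \<longlonglongrightarrow> 0)"

definition L1Linf_norm :: "'a measure \<Rightarrow> ('a \<Rightarrow> ennreal) \<Rightarrow> ennreal" where
  "L1Linf_norm M f = rearr M f 0 + (\<integral>\<^sup>+ t \<in> {0..}. rearr M f t \<partial>lborel)"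

definition L1Linf_embeds :: "'a measure \<Rightarrow> (('a \<Rightarrow> ennreal) \<Rightarrow> ennreal) \<Rightarrow> bool" where
  "L1Linf_embeds M N \<longleftrightarrow> (\<exists>C::real. C > 0 \<and>
     (\<forall>f \<in> borel_measurable M. N f \<le> ennreal C * L1Linf_norm M f))"

definition range_int :: "'a measure \<Rightarrow> real set" where
  "range_int M = {t. 0 \<le> t \<and> ennreal t < emeasure M (space M)}"

definition measure_preserving_onto :: "'a measure \<Rightarrow> ('a \<Rightarrow> real) \<Rightarrow> bool" where
  "measure_preserving_onto M \<sigma> \<longleftrightarrow>
     \<sigma> \<in> M \<rightarrow>\<^sub>M lborel \<and> (\<forall>x \<in> space M. \<sigma> x \<in> range_int M) \<and>
     (\<forall>E \<in> sets lborel. E \<subseteq> range_int M \<longrightarrow>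
        emeasure M (\<sigma> -` E \<inter> space M) = emeasure lborel E)"

definition T_op :: "'a measure \<Rightarrow> real \<Rightarrow> (nat \<Rightarrow> 'a set) \<Rightarrow> (real \<Rightarrow> ennreal) \<Rightarrow> 'a \<Rightarrow> ennreal" where
  "T_op M \<beta> e h x =
     (if \<exists>n \<in> atom_index M \<beta>. x \<in> e n
      then (let n = (SOME n. n \<in> atom_index M \<beta> \<and> x \<in> e n) in
            ennreal (1 / \<beta>) * (\<integral>\<^sup>+ t \<in> {\<beta> * real n .. \<beta> * real (n + 1)}. rearr halfline h t \<partial>lborel))
      else 0)"

definition Xbar_from :: "'a measure \<Rightarrow> ((real \<Rightarrow> ennreal) \<Rightarrow> ennreal) \<Rightarrow> (real \<Rightarrow> ennreal) \<Rightarrow> ennreal" where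
  "Xbar_from M N0 f = N0 (\<lambda>t. rearr halfline f t * indicator (range_int M) t)"

definition is_Xbar :: "'a measure \<Rightarrow> (('a \<Rightarrow> ennreal) \<Rightarrow> ennreal) \<Rightarrow> ((real \<Rightarrow> ennreal) \<Rightarrow> ennreal) \<Rightarrow> bool" where
  "is_Xbar M N Nb \<longleftrightarrow>
     (non_atomic M \<and> (\<exists>\<sigma>. measure_preserving_onto M \<sigma> \<and>
         Nb = Xbar_from M (\<lambda>h. N (\<lambda>x. h (\<sigma> x))))) \<or>
     (\<exists>\<beta> e. atom_enum M \<beta> e \<and> Nb = Xbar_from M (\<lambda>h. N (T_op M \<beta> e h)))"

end

theory Submission
  imports Defs
begin

text \<open>The heart of the matter is that \<open>\<parallel>\<chi>\<^sub>A\<parallel>\<^sub>X \<rightarrow> 0\<close> as \<open>\<mu>(A) \<rightarrow> 0\<close>.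
  In the atomic case sets of measure below that of an atom are null. In the non-atomic case,
  if \<open>\<mu>(A)\<close> is less than the measure of \<open>{f\<^sub>0 > c}\<close>, then \<open>\<chi>\<^sub>A\<close> has the same
  rearrangement as the indicator of a set on which \<open>c \<le> f\<^sub>0\<^sup>* \<circ> \<sigma>\<close>, so \<open>c \<parallel>\<chi>\<^sub>A\<parallel>\<^sub>X\<close> is
  at most the \<open>X\<close>-bar norm of \<open>f\<^sub>0\<close>; as \<open>f\<^sub>0\<^sup>*(0) = \<infinity>\<close>, \<open>c\<close> can be taken arbitrarily large.

  For \<open>f \<in> L\<^sup>1 \<inter> L\<^sup>\<infinity>\<close>, split \<open>f \<chi>\<^sub>E\<close> at a level \<open>\<delta>\<close>. The set \<open>F = {f > \<delta>}\<close> has finite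
  measure and \<open>f\<close> is essentially bounded, so the part on \<open>E \<inter> F\<close> has small norm once
  \<open>\<mu>(E \<inter> F)\<close> is small; the part below \<open>\<delta>\<close> has \<open>L\<^sup>1 \<inter> L\<^sup>\<infinity>\<close> norm at most
  \<open>\<delta> + \<integral> min(f\<^sup>*, \<delta>)\<close>, which tends to \<open>0\<close> with \<open>\<delta>\<close>, and the embedding carries this to \<open>X\<close>.\<close>

lemma downset_in_borel:
  fixes S :: "real set"
  assumes down: "\<And>x y. y \<in> S \<Longrightarrow> x \<le> y \<Longrightarrow> x \<in> S"
  shows "S \<in> sets borel"
proof (cases "S = UNIV \<or> S = {}")
  case True then show ?thesis by auto
next
  case False
  then obtain z y where z: "z \<notin> S" and y: "y \<in> S" by auto
  have bdd: "bdd_above S" using down z by (meson bdd_above.I nle_le)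
  have below: "{..<Sup S} \<subseteq> S"
  proof
    fix x assume "x \<in> {..<Sup S}"
    then obtain w where "w \<in> S" "x < w" using less_cSup_iff[OF _ bdd] y by auto
    then show "x \<in> S" using down by auto
  qed
  have above: "S \<subseteq> {..Sup S}" using cSup_upper[OF _ bdd] by auto
  obtain a where "S = {..a} \<or> S = {..<a}"
    using below above by (cases "Sup S \<in> S") (auto simp: le_less)
  then show ?thesis by auto
qed

lemma borel_measurable_antimono_ennreal:
  fixes g :: "real \<Rightarrow> ennreal"
  assumes "antimono g"
  shows "g \<in> borel_measurable borel"
proof (rule borel_measurableI_greater)
  fix y
  have "{x. y < g x} \<in> sets borel"
    using assms by (intro downset_in_borel) (auto dest: antimonoD intro: less_le_trans)
  then show "{x \<in> space borel. y < g x} \<in> sets borel" by simp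
qed

lemma rearr_antimono: "antimono (rearr M f)"
  unfolding rearr_def
  by (intro antimonoI Inf_superset_mono) (auto intro: order_trans ennreal_leI)

lemma rearr_borel_measurable[measurable]: "rearr M f \<in> borel_measurable lborel"
  using borel_measurable_antimono_ennreal[OF rearr_antimono] by simp

lemma emeasure_greater_le_if_rearr_less:
  assumes "rearr M f t < s" "f \<in> borel_measurable M"
  shows "emeasure M {x \<in> space M. s < f x} \<le> ennreal t"
proof -
  from assms(1) obtain s' where s': "emeasure M {x \<in> space M. s' < f x} \<le> ennreal t" "s' < s"
    unfolding rearr_def by (auto simp: Inf_less_iff)
  have "emeasure M {x \<in> space M. s < f x} \<le> emeasure M {x \<in> space M. s' < f x}"
    using s' assms(2) by (intro emeasure_mono) auto
  with s' show ?thesis by simp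
qed

lemma le_rearr_if_less_emeasure:
  assumes "ennreal t < emeasure M {x \<in> space M. s < f x}" "f \<in> borel_measurable M"
  shows "s \<le> rearr M f t"
  unfolding rearr_def
proof (rule Inf_greatest, rule ccontr)
  fix s' assume "s' \<in> {s. emeasure M {x \<in> space M. s < f x} \<le> ennreal t}" "\<not> s \<le> s'"
  then have "emeasure M {x \<in> space M. s < f x} \<le> emeasure M {x \<in> space M. s' < f x}"
      and "emeasure M {x \<in> space M. s' < f x} \<le> ennreal t"
    using assms(2) by (auto intro!: emeasure_mono intro: le_less_trans)
  with assms(1) show False by simp
qed

lemma rearr_le_const:
  assumes "\<And>x. x \<in> space M \<Longrightarrow> f x \<le> c"
  shows "rearr M f t \<le> c"
  unfolding rearr_def
proof (rule Inf_lower)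
  have "{x \<in> space M. c < f x} = {}" using assms by (auto simp: not_less[symmetric])
  then have "emeasure M {x \<in> space M. c < f x} = 0" by (simp only: emeasure_empty)
  then show "c \<in> {s. emeasure M {x \<in> space M. s < f x} \<le> ennreal t}" by simp
qed

lemma rearr_mono:
  assumes "\<And>x. x \<in> space M \<Longrightarrow> g x \<le> f x" "f \<in> borel_measurable M"
  shows "rearr M g t \<le> rearr M f t"
  unfolding rearr_def
proof (rule Inf_superset_mono, safe)
  fix s assume s: "emeasure M {x \<in> space M. s < f x} \<le> ennreal t"
  have "emeasure M {x \<in> space M. s < g x} \<le> emeasure M {x \<in> space M. s < f x}"
    using assms by (intro emeasure_mono) (auto intro: less_le_trans)
  with s show "emeasure M {x \<in> space M. s < g x} \<le> ennreal t" by simp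
qed

lemma rearr_indicator:
  assumes "A \<in> sets M"
  shows "rearr M (indicator A) t = (if emeasure M A \<le> ennreal t then 0 else 1)"
proof -
  have "{x \<in> space M. s < (indicator A x :: ennreal)} = (if s < 1 then A else {})" for s
    using sets.sets_into_space[OF assms] by (auto simp: indicator_def split: if_splits)
  then have "{s. emeasure M {x \<in> space M. s < (indicator A x :: ennreal)} \<le> ennreal t}
      = (if emeasure M A \<le> ennreal t then UNIV else {1..})"
    by (auto simp: not_less)
  then show ?thesis by (simp add: rearr_def bot_ennreal)
qed

lemma emeasure_greater_pos_if_rearr_zero_infinite:
  assumes "rearr M f 0 = \<infinity>"
  shows "0 < emeasure M {x \<in> space M. ennreal c < f x}"
proof (rule ccontr)
  assume "\<not> ?thesis"
  then have "rearr M f 0 \<le> ennreal c"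
    unfolding rearr_def by (intro Inf_lower) simp
  with assms show False by (simp add: top_unique)
qed

lemma AE_le_if_rearr_zero_less:
  assumes "rearr M f 0 < c" "f \<in> borel_measurable M"
  shows "AE x in M. f x \<le> c"
proof -
  have "emeasure M {x \<in> space M. c < f x} = 0"
    using emeasure_greater_le_if_rearr_less[OF assms] by simp
  then have "{x \<in> space M. c < f x} \<in> null_sets M" using assms(2) by (auto intro: null_setsI)
  then show ?thesis by (rule AE_not_in[THEN AE_mp]) (auto intro: AE_I2 simp: not_less)
qed

lemma AE_bounded_if_rearr_zero_finite:
  assumes "rearr M f 0 < \<infinity>" "f \<in> borel_measurable M"
  obtains K :: real where "1 \<le> K" "AE x in M. f x \<le> ennreal K"
proof
  show "1 \<le> enn2real (rearr M f 0) + 1" by simp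
  have "rearr M f 0 < ennreal (enn2real (rearr M f 0) + 1)"
    using assms(1) by (cases "rearr M f 0") (auto simp: ennreal_lessI)
  then show "AE x in M. f x \<le> ennreal (enn2real (rearr M f 0) + 1)"
    using AE_le_if_rearr_zero_less assms(2) by blast
qed

lemma emeasure_lborel_Ici_infinite: "emeasure lborel {0::real..} = \<infinity>"
proof -
  have "of_nat n \<le> emeasure lborel {0::real..}" for n
    using emeasure_mono[of "{0..real n}" "{0..}" lborel] by (simp add: ennreal_of_nat_eq_real_of_nat)
  then show ?thesis
    by (metis antisym_conv3 ennreal_Ex_less_of_nat infinity_ennreal_def linorder_not_less
        top.extremum_strict)
qed

lemma emeasure_greater_finite_if_nn_integral_rearr_finite:
  assumes "(\<integral>\<^sup>+ t \<in> {0..}. rearr M f t \<partial>lborel) < \<infinity>" "0 < \<delta>" "f \<in> borel_measurable M"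
  shows "emeasure M {x \<in> space M. ennreal \<delta> < f x} < \<infinity>"
proof -
  have "\<exists>t\<ge>0. rearr M f t < ennreal \<delta>"
  proof (rule ccontr)
    assume "\<not> ?thesis"
    then have ge: "ennreal \<delta> \<le> rearr M f t" if "0 \<le> t" for t
      using that by (auto simp: not_less)
    have "(\<integral>\<^sup>+ t \<in> {0::real..}. ennreal \<delta> \<partial>lborel) \<le> (\<integral>\<^sup>+ t \<in> {0..}. rearr M f t \<partial>lborel)"
      by (intro nn_integral_mono) (auto simp: indicator_def ge)
    moreover have "(\<integral>\<^sup>+ t \<in> {0::real..}. ennreal \<delta> \<partial>lborel) = \<infinity>"
      using \<open>0 < \<delta>\<close> by (simp add: nn_integral_cmult_indicator emeasure_lborel_Ici_infinite ennreal_mult_top)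
    ultimately show False using assms(1) by (simp add: top_unique)
  qed
  then obtain t where "0 \<le> t" "rearr M f t < ennreal \<delta>" by blast
  then have "emeasure M {x \<in> space M. ennreal \<delta> < f x} \<le> ennreal t"
    using emeasure_greater_le_if_rearr_less assms(3) by blast
  also have "\<dots> < \<infinity>" by simp
  finally show ?thesis .
qed

lemma qBFN_mult:
  "qBFN M N \<Longrightarrow> f \<in> borel_measurable M \<Longrightarrow> 0 \<le> a \<Longrightarrow> N (\<lambda>x. ennreal a * f x) = ennreal a * N f"
  unfolding qBFN_def by blast

lemma qBFN_eq_0_iff:
  "qBFN M N \<Longrightarrow> f \<in> borel_measurable M \<Longrightarrow> N f = 0 \<longleftrightarrow> (AE x in M. f x = 0)"
  unfolding qBFN_def by blast

lemma qBFN_mono: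
  "qBFN M N \<Longrightarrow> f \<in> borel_measurable M \<Longrightarrow> g \<in> borel_measurable M \<Longrightarrow>
    (AE x in M. f x \<le> g x) \<Longrightarrow> N f \<le> N g"
  unfolding qBFN_def by blast

lemma qBFN_quasi_triangle:
  "qBFN M N \<Longrightarrow> \<exists>C::real. 1 \<le> C \<and> (\<forall>f \<in> borel_measurable M. \<forall>g \<in> borel_measurable M.
     N (\<lambda>x. f x + g x) \<le> ennreal C * (N f + N g))"
  unfolding qBFN_def by blast

lemma qBFN_mult_indicator_le:
  assumes "qBFN M N" "f \<in> borel_measurable M" "A \<in> sets M" "AE x in M. f x \<le> ennreal K" "0 \<le> K"
  shows "N (\<lambda>x. f x * indicator A x) \<le> ennreal K * N (indicator A)"
proof -
  have [measurable]: "f \<in> borel_measurable M" "A \<in> sets M" by (fact assms(2,3))+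
  have "AE x in M. f x * indicator A x \<le> ennreal K * indicator A x"
    using assms(4) by eventually_elim (auto simp: indicator_def)
  then have "N (\<lambda>x. f x * indicator A x) \<le> N (\<lambda>x. ennreal K * indicator A x)"
    by (rule qBFN_mono[OF assms(1), rotated 2]) measurable
  also have "\<dots> = ennreal K * N (indicator A)"
    using qBFN_mult[OF assms(1), of "indicator A" K] assms(5) by simp
  finally show ?thesis .
qed

lemma ri_qBFN_indicator_eq:
  assumes "ri_qBFN M N" "A \<in> sets M" "B \<in> sets M" "emeasure M A = emeasure M B"
  shows "N (indicator A) = N (indicator B)"
proof -
  have "rearrangement_invariant M N" using assms(1) by (simp add: ri_qBFN_def)
  moreover have "\<forall>t\<ge>0. rearr M (indicator A) t = rearr M (indicator B) t"
    using assms(2-4) by (simp add: rearr_indicator)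
  ultimately show ?thesis
    using assms(2,3) unfolding rearrangement_invariant_def by (meson borel_measurable_indicator)
qed

text \<open>For an r.i. norm this says that the fundamental function \<open>\<phi>(t) = \<parallel>\<chi>\<^sub>E\<parallel>\<close>,
  \<open>\<mu>(E) = t\<close>, tends to \<open>0\<close> as \<open>t \<rightarrow> 0+\<close>.\<close>
definition indicator_norm_vanishes :: "'a measure \<Rightarrow> (('a \<Rightarrow> ennreal) \<Rightarrow> ennreal) \<Rightarrow> bool" where
  "indicator_norm_vanishes M N \<longleftrightarrow> (\<forall>\<epsilon>>0. \<exists>\<eta>>0. \<forall>A \<in> sets M.
     emeasure M A \<le> ennreal \<eta> \<longrightarrow> N (indicator A) \<le> ennreal \<epsilon>)"

lemma atom_Int_null_if_less:
  assumes "atom M B" "A \<in> sets M" "emeasure M A < emeasure M B"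
  shows "A \<inter> B \<in> null_sets M"
proof -
  have B: "B \<in> sets M" using assms(1) by (simp add: atom_def)
  have AB: "A \<inter> B \<in> sets M" using B assms(2) by auto
  have "emeasure M (B - A \<inter> B) \<noteq> 0"
  proof
    assume "emeasure M (B - A \<inter> B) = 0"
    moreover have "emeasure M B = emeasure M (A \<inter> B) + emeasure M (B - A \<inter> B)"
      using AB B by (subst plus_emeasure) (auto intro: arg_cong[where f="emeasure M"])
    moreover have "emeasure M (A \<inter> B) \<le> emeasure M A"
      using assms(2) by (intro emeasure_mono) auto
    ultimately show False using assms(3) by simp
  qed
  moreover have "emeasure M (A \<inter> B) = 0 \<or> emeasure M (B - A \<inter> B) = 0"
    using assms(1) AB unfolding atom_def by blast
  ultimately show ?thesis using AB by auto
qed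

lemma null_set_if_less_atom_measure:
  assumes "atom_enum M \<beta> e" "A \<in> sets M" "emeasure M A < ennreal \<beta>"
  shows "A \<in> null_sets M"
proof -
  let ?I = "atom_index M \<beta>"
  have "A \<inter> e n \<in> null_sets M" if "n \<in> ?I" for n
    using assms that by (intro atom_Int_null_if_less) (auto simp: atom_enum_def)
  then have "(\<Union>n\<in>?I. A \<inter> e n) \<in> null_sets M"
    by (intro null_sets_UN') auto
  moreover have "A \<inter> (space M - (\<Union>n\<in>?I. e n)) \<in> null_sets M"
    using assms(1,2) by (intro null_set_Int1) (auto simp: atom_enum_def)
  ultimately have "(\<Union>n\<in>?I. A \<inter> e n) \<union> (A \<inter> (space M - (\<Union>n\<in>?I. e n))) \<in> null_sets M"
    by (rule null_sets.Un)
  moreover have "(\<Union>n\<in>?I. A \<inter> e n) \<union> (A \<inter> (space M - (\<Union>n\<in>?I. e n))) = A"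
    using sets.sets_into_space[OF assms(2)] by auto
  ultimately show ?thesis by (simp only:)
qed

lemma indicator_norm_vanishes_atomic:
  assumes "qBFN M N" "atom_enum M \<beta> e"
  shows "indicator_norm_vanishes M N"
proof -
  have "0 < \<beta>" using assms(2) by (simp add: atom_enum_def)
  have "N (indicator A) = 0" if "A \<in> sets M" "emeasure M A \<le> ennreal (\<beta> / 2)" for A
  proof -
    have "ennreal (\<beta> / 2) < ennreal \<beta>" using \<open>0 < \<beta>\<close> by (simp add: ennreal_lessI)
    with that have "A \<in> null_sets M"
      by (intro null_set_if_less_atom_measure[OF assms(2)]) auto
    then have "AE x in M. (indicator A x :: ennreal) = 0"
      by (rule AE_not_in[THEN eventually_mono]) simp
    then show ?thesis using qBFN_eq_0_iff[OF assms(1)] that(1) by simp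
  qed
  with \<open>0 < \<beta>\<close> show ?thesis unfolding indicator_norm_vanishes_def
    by (intro allI impI exI[of _ "\<beta> / 2"]) auto
qed

lemma range_int_borel: "range_int M \<in> sets borel"
proof -
  have "{t::real. ennreal t < emeasure M (space M)} \<in> sets borel"
    by (rule downset_in_borel) (auto intro: le_less_trans ennreal_leI)
  moreover have "range_int M = {0..} \<inter> {t::real. ennreal t < emeasure M (space M)}"
    by (auto simp: range_int_def)
  ultimately show ?thesis by auto
qed

lemma measure_preserving_onto_preimage_initial_segment:
  assumes "measure_preserving_onto M \<sigma>" "0 \<le> a" "ennreal a \<le> emeasure M (space M)"
  shows "\<sigma> -` {0..<a} \<inter> space M \<in> sets M"
    and "emeasure M (\<sigma> -` {0..<a} \<inter> space M) = ennreal a"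
proof -
  have "\<sigma> \<in> M \<rightarrow>\<^sub>M lborel" using assms(1) by (simp add: measure_preserving_onto_def)
  then show "\<sigma> -` {0..<a} \<inter> space M \<in> sets M" by measurable
  have "{0..<a} \<subseteq> range_int M"
  proof
    fix t assume t: "t \<in> {0..<a}"
    then have "ennreal t < ennreal a" by (auto intro: ennreal_lessI)
    also note assms(3)
    finally show "t \<in> range_int M" using t by (simp add: range_int_def)
  qed
  then show "emeasure M (\<sigma> -` {0..<a} \<inter> space M) = ennreal a"
    using assms(1,2) by (simp add: measure_preserving_onto_def)
qed

lemma scaled_indicator_norm_le_Xbar_nonatomic:
  assumes ri: "ri_qBFN M N" and \<sigma>: "measure_preserving_onto M \<sigma>"
    and Nb: "Nb = Xbar_from M (\<lambda>h. N (\<lambda>x. h (\<sigma> x)))"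
    and f0: "f0 \<in> borel_measurable halfline" and "0 \<le> c"
    and A: "A \<in> sets M" "emeasure M A < emeasure halfline {t \<in> space halfline. ennreal c < f0 t}"
  shows "ennreal c * N (indicator A) \<le> Nb f0"
proof -
  have q: "qBFN M N" using ri by (simp add: ri_qBFN_def)
  have \<sigma>_meas: "\<sigma> \<in> M \<rightarrow>\<^sub>M lborel" and \<sigma>_range: "\<And>x. x \<in> space M \<Longrightarrow> \<sigma> x \<in> range_int M"
    using \<sigma> by (auto simp: measure_preserving_onto_def)
  define h where "h t = rearr halfline f0 t * indicator (range_int M) t" for t
  have "h \<in> borel_measurable lborel"
    unfolding h_def using range_int_borel[of M] by measurable
  then have h_meas: "(\<lambda>x. h (\<sigma> x)) \<in> borel_measurable M"
    using measurable_compose[OF \<sigma>_meas] by blast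
  obtain a where a: "emeasure M A = ennreal a" "0 \<le> a"
    using A(2) by (cases "emeasure M A") (auto simp: top_unique)
  define B where "B = \<sigma> -` {0..<a} \<inter> space M"
  have "ennreal a \<le> emeasure M (space M)" using a(1) emeasure_space[of M A] by simp
  then have B: "B \<in> sets M" and "emeasure M B = emeasure M A"
    unfolding B_def a(1) using measure_preserving_onto_preimage_initial_segment[OF \<sigma> a(2)] by auto
  then have NA: "N (indicator A) = N (indicator B)"
    using ri_qBFN_indicator_eq[OF ri A(1) B] by simp
  have "ennreal c * indicator B x \<le> h (\<sigma> x)" if x: "x \<in> space M" for x
  proof (cases "x \<in> B")
    case True
    then have \<sigma>x: "\<sigma> x < a" "\<sigma> x \<in> range_int M" using \<sigma>_range x by (auto simp: B_def)
    have "ennreal c \<le> rearr halfline f0 a"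
      using A(2) a by (intro le_rearr_if_less_emeasure[OF _ f0]) simp
    also have "\<dots> \<le> rearr halfline f0 (\<sigma> x)"
      using \<sigma>x by (intro antimonoD[OF rearr_antimono]) simp
    finally show ?thesis using True \<sigma>x by (simp add: h_def)
  qed simp
  then have "N (\<lambda>x. ennreal c * indicator B x) \<le> N (\<lambda>x. h (\<sigma> x))"
    by (intro qBFN_mono[OF q _ h_meas] AE_I2) (use B in auto)
  moreover have "N (\<lambda>x. ennreal c * indicator B x) = ennreal c * N (indicator B)"
    using qBFN_mult[OF q, of "indicator B" c] B \<open>0 \<le> c\<close> by simp
  moreover have "Nb f0 = N (\<lambda>x. h (\<sigma> x))" using Nb by (simp add: Xbar_from_def h_def)
  ultimately show ?thesis using NA by simp
qed

lemma indicator_norm_vanishes_nonatomic: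
  assumes ri: "ri_qBFN M N" and \<sigma>: "measure_preserving_onto M \<sigma>"
    and Nb: "Nb = Xbar_from M (\<lambda>h. N (\<lambda>x. h (\<sigma> x)))"
    and f0: "in_space halfline Nb f0" "rearr halfline f0 0 = \<infinity>"
  shows "indicator_norm_vanishes M N"
  unfolding indicator_norm_vanishes_def
proof (intro allI impI)
  fix \<epsilon> :: real assume "0 < \<epsilon>"
  obtain b where b: "Nb f0 = ennreal b" "0 \<le> b"
    using f0(1) by (cases "Nb f0") (auto simp: in_space_def)
  define c where "c = b / \<epsilon> + 1"
  have c: "1 \<le> c" "b / c \<le> \<epsilon>"
    using b \<open>0 < \<epsilon>\<close> by (simp_all add: c_def field_simps)
  let ?L = "emeasure halfline {t \<in> space halfline. ennreal c < f0 t}"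
  obtain e where "0 < e" "e < ?L"
    using dense[OF emeasure_greater_pos_if_rearr_zero_infinite[OF f0(2)]] by blast
  then obtain \<eta> where \<eta>: "0 < \<eta>" "ennreal \<eta> < ?L"
    by (metis enn2real_positive_iff ennreal_enn2real leD top.not_eq_extremum top_greatest)
  have "N (indicator A) \<le> ennreal \<epsilon>" if A: "A \<in> sets M" "emeasure M A \<le> ennreal \<eta>" for A
  proof -
    have "ennreal c * N (indicator A) \<le> Nb f0"
      by (rule scaled_indicator_norm_le_Xbar_nonatomic[OF ri \<sigma> Nb _ _ A(1)])
        (use f0(1) c(1) A(2) \<eta>(2) in \<open>auto simp: in_space_def intro: le_less_trans\<close>)
    then have "ennreal c * N (indicator A) \<le> ennreal b" using b(1) by simp
    then obtain r where r: "N (indicator A) = ennreal r" "0 \<le> r"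
      using c(1) by (cases "N (indicator A)") (auto simp: ennreal_mult_top top_unique)
    with \<open>ennreal c * N (indicator A) \<le> ennreal b\<close> have "c * r \<le> b"
      using c(1) b(2) by (simp add: ennreal_mult'[symmetric] ennreal_le_iff)
    then have "r \<le> b / c" using c(1) by (simp add: field_simps)
    with c(2) r show ?thesis by (simp add: ennreal_leI)
  qed
  with \<eta>(1) show "\<exists>\<eta>>0. \<forall>A\<in>sets M. emeasure M A \<le> ennreal \<eta> \<longrightarrow> N (indicator A) \<le> ennreal \<epsilon>"
    by blast
qed

lemma indicator_norm_vanishes_if_Xbar_unbounded:
  assumes ri: "ri_qBFN M N" and "is_Xbar M N Nb"
    and "\<exists>f0. in_space halfline Nb f0 \<and> rearr halfline f0 0 = \<infinity>"
  shows "indicator_norm_vanishes M N"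
  using assms(2) unfolding is_Xbar_def
proof (elim disjE exE conjE)
  fix \<sigma> assume "measure_preserving_onto M \<sigma>" "Nb = Xbar_from M (\<lambda>h. N (\<lambda>x. h (\<sigma> x)))"
  then show ?thesis using assms(3) indicator_norm_vanishes_nonatomic[OF ri] by blast
next
  fix \<beta> e assume "atom_enum M \<beta> e"
  then show ?thesis using ri indicator_norm_vanishes_atomic by (auto simp: ri_qBFN_def)
qed

lemma L1Linf_norm_le_truncation:
  assumes "f \<in> borel_measurable M"
    and "\<And>x. x \<in> space M \<Longrightarrow> g x \<le> f x" "\<And>x. x \<in> space M \<Longrightarrow> g x \<le> ennreal \<delta>"
  shows "L1Linf_norm M g \<le> ennreal \<delta> + (\<integral>\<^sup>+ t \<in> {0..}. min (rearr M f t) (ennreal \<delta>) \<partial>lborel)"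
proof -
  have r: "rearr M g t \<le> min (rearr M f t) (ennreal \<delta>)" for t
    using rearr_mono[OF assms(2,1)] rearr_le_const[OF assms(3)] by simp
  show ?thesis
    unfolding L1Linf_norm_def
  proof (rule add_mono)
    show "rearr M g 0 \<le> ennreal \<delta>" using r[of 0] by simp
    show "(\<integral>\<^sup>+ t \<in> {0..}. rearr M g t \<partial>lborel) \<le> (\<integral>\<^sup>+ t \<in> {0..}. min (rearr M f t) (ennreal \<delta>) \<partial>lborel)"
      by (intro nn_integral_mono mult_right_mono r) simp
  qed
qed

lemma truncated_rearr_integral_small:
  assumes "(\<integral>\<^sup>+ t \<in> {0..}. rearr M f t \<partial>lborel) < \<infinity>" "0 < r"
  shows "\<exists>\<delta>>0. ennreal \<delta> + (\<integral>\<^sup>+ t \<in> {0..}. min (rearr M f t) (ennreal \<delta>) \<partial>lborel) < ennreal r"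
proof -
  define \<delta> where "\<delta> i = inverse (real (Suc i))" for i
  define u where "u i t = min (rearr M f t) (ennreal (\<delta> i)) * indicator {0::real..} t" for i t
  have \<delta>_lim: "(\<lambda>i. ennreal (\<delta> i)) \<longlonglongrightarrow> 0"
    unfolding \<delta>_def using LIMSEQ_inverse_real_of_nat by (simp add: ennreal_tendsto_0_iff)
  have u_meas: "\<And>i. u i \<in> borel_measurable lborel" unfolding u_def by measurable
  have u_le: "\<And>i. AE t in lborel. u i t \<le> rearr M f t * indicator {0..} t"
    by (intro AE_I2) (auto simp: u_def indicator_def)
  have u_lim: "AE t in lborel. (\<lambda>i. u i t) \<longlonglongrightarrow> 0"
  proof (intro AE_I2 tendsto_sandwich[OF _ _ tendsto_const \<delta>_lim])
    fix t
    show "\<forall>\<^sub>F i in sequentially. 0 \<le> u i t" by simp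
    show "\<forall>\<^sub>F i in sequentially. u i t \<le> ennreal (\<delta> i)"
      by (intro always_eventually allI) (auto simp: u_def indicator_def)
  qed
  have "(\<lambda>i. \<integral>\<^sup>+ t. u i t \<partial>lborel) \<longlonglongrightarrow> 0"
    using nn_integral_dominated_convergence[OF u_meas _ _ u_le assms(1) u_lim] by simp
  then have "(\<lambda>i. ennreal (\<delta> i) + (\<integral>\<^sup>+ t \<in> {0..}. min (rearr M f t) (ennreal (\<delta> i)) \<partial>lborel)) \<longlonglongrightarrow> 0 + 0"
    unfolding u_def by (intro tendsto_add \<delta>_lim) simp
  then have "\<forall>\<^sub>F i in sequentially.
      ennreal (\<delta> i) + (\<integral>\<^sup>+ t \<in> {0..}. min (rearr M f t) (ennreal (\<delta> i)) \<partial>lborel) < ennreal r"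
    using assms(2) by (simp add: order_tendsto_iff)
  moreover have "\<forall>i. 0 < \<delta> i" by (simp add: \<delta>_def)
  ultimately show ?thesis by (auto simp: eventually_sequentially)
qed

lemma emeasure_Int_tendsto_zero:
  assumes "F \<in> sets M" "emeasure M F < \<infinity>" "\<And>k. E k \<in> sets M"
    and "AE x in M. (\<lambda>k. indicator (E k) x :: real) \<longlonglongrightarrow> 0"
  shows "(\<lambda>k. emeasure M (E k \<inter> F)) \<longlonglongrightarrow> 0"
proof -
  have dom: "AE x in M. (indicator (E k \<inter> F) x :: ennreal) \<le> indicator F x" for k
    by (intro AE_I2) (auto simp: indicator_def)
  have lim: "AE x in M. (\<lambda>k. indicator (E k \<inter> F) x :: ennreal) \<longlonglongrightarrow> 0"
    using assms(4)
  proof eventually_elim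
    case (elim x)
    have "\<forall>\<^sub>F k in sequentially. (indicator (E k) x :: real) < 1/2"
      by (rule order_tendstoD(2)[OF elim]) simp
    then have "\<forall>\<^sub>F k in sequentially. (indicator (E k \<inter> F) x :: ennreal) = 0"
      by (rule eventually_mono) (auto simp: indicator_def split: if_splits)
    then show ?case by (rule tendsto_eventually)
  qed
  have "(\<lambda>k. \<integral>\<^sup>+ x. indicator (E k \<inter> F) x \<partial>M) \<longlonglongrightarrow> (\<integral>\<^sup>+ x. 0 \<partial>M)"
    by (rule nn_integral_dominated_convergence[OF _ _ _ dom _ lim]) (use assms in auto)
  then show ?thesis using assms(1,3) by simp
qed

lemma norm_mult_indicator_split_le:
  fixes N :: "('a \<Rightarrow> ennreal) \<Rightarrow> ennreal" and f :: "'a \<Rightarrow> ennreal"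
  assumes tri: "\<And>g h. g \<in> borel_measurable M \<Longrightarrow> h \<in> borel_measurable M \<Longrightarrow>
      N (\<lambda>x. g x + h x) \<le> ennreal C * (N g + N h)"
    and [measurable]: "f \<in> borel_measurable M" "E \<in> sets M" "F \<in> sets M"
  shows "N (\<lambda>x. f x * indicator E x)
    \<le> ennreal C * (N (\<lambda>x. f x * indicator (E \<inter> F) x) + N (\<lambda>x. f x * indicator (E - F) x))"
proof -
  have "(\<lambda>x. f x * indicator E x) = (\<lambda>x. f x * indicator (E \<inter> F) x + f x * indicator (E - F) x)"
    by (auto simp: indicator_def fun_eq_iff)
  then show ?thesis by (simp only:) (rule tri; measurable)
qed

lemma norm_mult_indicator_below_level_le:
  assumes embed: "\<And>g. g \<in> borel_measurable M \<Longrightarrow> N g \<le> ennreal c * L1Linf_norm M g"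
    and [measurable]: "f \<in> borel_measurable M" "E \<in> sets M"
  shows "N (\<lambda>x. f x * indicator (E - {x \<in> space M. ennreal \<delta> < f x}) x)
    \<le> ennreal c * (ennreal \<delta> + (\<integral>\<^sup>+ t \<in> {0..}. min (rearr M f t) (ennreal \<delta>) \<partial>lborel))"
proof -
  let ?g = "\<lambda>x. f x * indicator (E - {x \<in> space M. ennreal \<delta> < f x}) x"
  have "N ?g \<le> ennreal c * L1Linf_norm M ?g" by (rule embed) measurable
  also have "L1Linf_norm M ?g
      \<le> ennreal \<delta> + (\<integral>\<^sup>+ t \<in> {0..}. min (rearr M f t) (ennreal \<delta>) \<partial>lborel)"
    by (rule L1Linf_norm_le_truncation[OF assms(2)]) (auto simp: indicator_def not_less)
  finally show ?thesis by (simp add: mult_left_mono)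
qed

lemma norm_mult_indicator_below_level_small:
  assumes "L1Linf_embeds M N" "f \<in> borel_measurable M"
    and "(\<integral>\<^sup>+ t \<in> {0..}. rearr M f t \<partial>lborel) < \<infinity>" "0 < \<epsilon>"
  obtains \<delta> where "0 < \<delta>" "\<And>E. E \<in> sets M \<Longrightarrow>
    N (\<lambda>x. f x * indicator (E - {x \<in> space M. ennreal \<delta> < f x}) x) \<le> ennreal \<epsilon>"
proof -
  obtain c where c: "0 < c" "\<And>g. g \<in> borel_measurable M \<Longrightarrow> N g \<le> ennreal c * L1Linf_norm M g"
    using assms(1) by (auto simp: L1Linf_embeds_def)
  obtain \<delta> where \<delta>: "0 < \<delta>"
      "ennreal \<delta> + (\<integral>\<^sup>+ t \<in> {0..}. min (rearr M f t) (ennreal \<delta>) \<partial>lborel) < ennreal (\<epsilon> / c)"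
    using truncated_rearr_integral_small[OF assms(3)] assms(4) c(1) by (meson divide_pos_pos)
  have "N (\<lambda>x. f x * indicator (E - {x \<in> space M. ennreal \<delta> < f x}) x) \<le> ennreal \<epsilon>"
    if "E \<in> sets M" for E
  proof -
    have "N (\<lambda>x. f x * indicator (E - {x \<in> space M. ennreal \<delta> < f x}) x)
        \<le> ennreal c * (ennreal \<delta> + (\<integral>\<^sup>+ t \<in> {0..}. min (rearr M f t) (ennreal \<delta>) \<partial>lborel))"
      by (rule norm_mult_indicator_below_level_le[OF c(2) assms(2) that])
    also have "\<dots> \<le> ennreal c * ennreal (\<epsilon> / c)"
      using \<delta>(2) by (intro mult_left_mono) simp_all
    also have "\<dots> = ennreal \<epsilon>"
      using c(1) assms(4) by (simp add: ennreal_mult[symmetric])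
    finally show ?thesis .
  qed
  with \<delta>(1) show ?thesis using that by blast
qed

lemma norm_mult_indicator_small_if_measure_small:
  assumes "qBFN M N" "indicator_norm_vanishes M N" "f \<in> borel_measurable M"
    and "AE x in M. f x \<le> ennreal K" "0 < K" "0 < \<epsilon>"
  obtains \<eta> where "0 < \<eta>" "\<And>A. A \<in> sets M \<Longrightarrow> emeasure M A \<le> ennreal \<eta> \<Longrightarrow>
    N (\<lambda>x. f x * indicator A x) \<le> ennreal \<epsilon>"
proof -
  have "0 < \<epsilon> / K" using assms(5,6) by simp
  from assms(2)[unfolded indicator_norm_vanishes_def, rule_format, OF this]
  obtain \<eta> where \<eta>: "0 < \<eta>"
      "\<And>A. A \<in> sets M \<Longrightarrow> emeasure M A \<le> ennreal \<eta> \<Longrightarrow> N (indicator A) \<le> ennreal (\<epsilon> / K)"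
    by blast
  have "N (\<lambda>x. f x * indicator A x) \<le> ennreal \<epsilon>"
    if "A \<in> sets M" "emeasure M A \<le> ennreal \<eta>" for A
  proof -
    have "N (\<lambda>x. f x * indicator A x) \<le> ennreal K * N (indicator A)"
      using qBFN_mult_indicator_le[OF assms(1,3) that(1) assms(4)] assms(5) by simp
    also have "\<dots> \<le> ennreal K * ennreal (\<epsilon> / K)"
      using \<eta>(2)[OF that] by (intro mult_left_mono) auto
    also have "\<dots> = ennreal \<epsilon>"
      using assms(5,6) by (simp add: ennreal_mult[symmetric])
    finally show ?thesis .
  qed
  with \<eta>(1) show ?thesis using that by blast
qed

lemma norm_mult_indicator_uniformly_small:
  assumes q: "qBFN M N" and embed: "L1Linf_embeds M N" and vanish: "indicator_norm_vanishes M N"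
    and f[measurable]: "f \<in> borel_measurable M" and "L1Linf_norm M f < \<infinity>" and "0 < \<epsilon>"
  shows "\<exists>F \<in> sets M. emeasure M F < \<infinity> \<and> (\<exists>\<eta>>0. \<forall>E \<in> sets M.
    emeasure M (E \<inter> F) \<le> ennreal \<eta> \<longrightarrow> N (\<lambda>x. f x * indicator E x) \<le> ennreal \<epsilon>)"
proof -
  obtain C where C: "1 \<le> C" "\<And>g h. g \<in> borel_measurable M \<Longrightarrow> h \<in> borel_measurable M \<Longrightarrow>
      N (\<lambda>x. g x + h x) \<le> ennreal C * (N g + N h)"
    using qBFN_quasi_triangle[OF q] by blast
  have f_top: "rearr M f 0 < \<infinity>" and f_int: "(\<integral>\<^sup>+ t \<in> {0..}. rearr M f t \<partial>lborel) < \<infinity>"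
    using assms(5) by (auto simp: L1Linf_norm_def less_top[symmetric])
  obtain K where "1 \<le> K" and f_bounded: "AE x in M. f x \<le> ennreal K"
    using AE_bounded_if_rearr_zero_finite[OF f_top f] .
  define e where "e = \<epsilon> / (2 * C)"
  have "0 < e" using \<open>0 < \<epsilon>\<close> C(1) by (simp add: e_def)
  obtain \<delta> where "0 < \<delta>" and below: "\<And>E. E \<in> sets M \<Longrightarrow>
      N (\<lambda>x. f x * indicator (E - {x \<in> space M. ennreal \<delta> < f x}) x) \<le> ennreal e"
    using norm_mult_indicator_below_level_small[OF embed f f_int \<open>0 < e\<close>] by blast
  obtain \<eta> where "0 < \<eta>" and above: "\<And>A. A \<in> sets M \<Longrightarrow> emeasure M A \<le> ennreal \<eta> \<Longrightarrow>
      N (\<lambda>x. f x * indicator A x) \<le> ennreal e"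
    using norm_mult_indicator_small_if_measure_small[OF q vanish f f_bounded _ \<open>0 < e\<close>] \<open>1 \<le> K\<close>
    by (metis less_le_trans zero_less_one)
  define F where "F = {x \<in> space M. ennreal \<delta> < f x}"
  have F[measurable]: "F \<in> sets M" unfolding F_def by measurable
  have "N (\<lambda>x. f x * indicator E x) \<le> ennreal \<epsilon>"
    if E[measurable]: "E \<in> sets M" and small: "emeasure M (E \<inter> F) \<le> ennreal \<eta>" for E
  proof -
    have "N (\<lambda>x. f x * indicator E x)
        \<le> ennreal C * (N (\<lambda>x. f x * indicator (E \<inter> F) x) + N (\<lambda>x. f x * indicator (E - F) x))"
      by (rule norm_mult_indicator_split_le[where C = C, OF C(2) f E F])
    also have "\<dots> \<le> ennreal C * (ennreal e + ennreal e)"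
      using above[OF _ small] below[OF E] unfolding F_def by (intro mult_left_mono add_mono) simp_all
    also have "\<dots> = ennreal \<epsilon>"
      using C(1) \<open>0 < e\<close> by (simp add: e_def ennreal_plus[symmetric] ennreal_mult[symmetric] del: ennreal_plus)
    finally show ?thesis .
  qed
  moreover have "emeasure M F < \<infinity>"
    unfolding F_def by (rule emeasure_greater_finite_if_nn_integral_rearr_finite[OF f_int \<open>0 < \<delta>\<close> f])
  ultimately show ?thesis using F \<open>0 < \<eta>\<close> by blast
qed

lemma abs_cont_if_L1Linf_norm_finite:
  assumes q: "qBFN M N" and embeds: "L1Linf_embeds M N" and vanish: "indicator_norm_vanishes M N"
    and f: "f \<in> borel_measurable M" and fin: "L1Linf_norm M f < \<infinity>"
  shows "abs_cont M N f"
  unfolding abs_cont_def in_space_def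
proof (intro conjI f allI impI)
  obtain c where "N f \<le> ennreal c * L1Linf_norm M f"
    using embeds f by (auto simp: L1Linf_embeds_def)
  also have "\<dots> < \<infinity>" using fin by (simp add: ennreal_mult_less_top less_top)
  finally show "N f < \<infinity>" .
next
  fix E :: "nat \<Rightarrow> 'a set"
  assume E: "\<forall>k. E k \<in> sets M" and E_lim: "AE x in M. (\<lambda>k. indicator (E k) x :: real) \<longlonglongrightarrow> 0"
  show "(\<lambda>k. N (\<lambda>x. f x * indicator (E k) x)) \<longlonglongrightarrow> 0"
  proof (rule tendsto_zero_ennreal)
    fix r :: real assume "0 < r"
    then obtain F \<eta> where F: "F \<in> sets M" "emeasure M F < \<infinity>" and "0 < \<eta>"
      and small: "\<And>E. E \<in> sets M \<Longrightarrow> emeasure M (E \<inter> F) \<le> ennreal \<eta> \<Longrightarrow>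
        N (\<lambda>x. f x * indicator E x) \<le> ennreal (r / 2)"
      using norm_mult_indicator_uniformly_small[OF q embeds vanish f fin, of "r / 2"] by auto
    have "(\<lambda>k. emeasure M (E k \<inter> F)) \<longlonglongrightarrow> 0"
      using emeasure_Int_tendsto_zero[OF F] E E_lim by blast
    then have "\<forall>\<^sub>F k in sequentially. emeasure M (E k \<inter> F) < ennreal \<eta>"
      using \<open>0 < \<eta>\<close> by (simp add: order_tendsto_iff)
    then show "\<forall>\<^sub>F k in sequentially. N (\<lambda>x. f x * indicator (E k) x) < ennreal r"
    proof (rule eventually_mono)
      fix k assume "emeasure M (E k \<inter> F) < ennreal \<eta>"
      then have "N (\<lambda>x. f x * indicator (E k) x) \<le> ennreal (r / 2)" using small E by simp
      also have "\<dots> < ennreal r" using \<open>0 < r\<close> by (simp add: ennreal_lessI)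
      finally show "N (\<lambda>x. f x * indicator (E k) x) < ennreal r" .
    qed
  qed
qed

theorem mainTheorem10:
  fixes M :: "'a measure" and N :: "('a \<Rightarrow> ennreal) \<Rightarrow> ennreal"
    and Nb :: "(real \<Rightarrow> ennreal) \<Rightarrow> ennreal"
  assumes "sigma_finite_measure M"
    and "resonant M"
    and "ri_qBFN M N"
    and "is_Xbar M N Nb"
    and "L1Linf_embeds M N"
    and "\<exists>f0. in_space halfline Nb f0 \<and> rearr halfline f0 0 = \<infinity>"
  shows "\<forall>f \<in> borel_measurable M. L1Linf_norm M f < \<infinity> \<longrightarrow> abs_cont M N f"
proof (intro ballI impI)
  fix f assume "f \<in> borel_measurable M" "L1Linf_norm M f < \<infinity>"
  moreover have "qBFN M N" using assms(3) by (simp add: ri_qBFN_def)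
  moreover have "indicator_norm_vanishes M N"
    using indicator_norm_vanishes_if_Xbar_unbounded[OF assms(3,4,6)] .
  ultimately show "abs_cont M N f"
    using abs_cont_if_L1Linf_norm_finite[OF _ assms(5)] by blast
qed

end
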